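(* Let $\pi$ be a belief-based policy and $H\ge 0$. Assume $\mathcal X$ is convex, $c$ is continuously differentiable in $x$ and satisfies, for constants $K_c,K_g>0$ and all $(x,u)$, $|c(x,u)|\le K_c(1+\|x\|^2+\|u\|^2)$ and $\|\nabla_xc(x,u)\|\le K_g(1+\|x\|+\|u\|)$. Assume there is $M_\pi\in(0,\infty)$ such that almost surely, for all $t\ge0$, $\mathbb E_{x\sim b_t^\pi}\|x\|^2\le M_\pi$ and $\mathbb E_{x\sim\hat b_t^{(H),\pi}}\|x\|^2\le M_\pi$, and that there is $U_\pi\in(0,\infty)$ with $\|u_t\|^2\le U_\pi$ almost surely for all $t\ge0$, where $u_t=\pi(b_t^\pi)$. Then there is a finite constant $C_\pi>0$ independent of $H$ (one may take $C_\pi=L_\pi(1+U_\pi)$ with $L_\pi=K_g\sqrt{3+24M_\pi}$) such that $$|J(\pi)-\hat J_H(\pi)|\le\frac{C_\pi}{1-\gamma}\,\varepsilon_H(\pi).$$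
   Context: Setting: a discounted POMDP with Borel state space $\mathcal X\subset\mathbb R^n$, control space $\mathcal U\subset\mathbb R^m$, observation space $\mathcal Y\subset\mathbb R^p$, transition kernel $P(dx'\mid x,u)$, observation kernel $O(dy\mid x)$, measurable stage cost $c:\mathcal X\times\mathcal U\to\mathbb R$ and discount factor $\gamma\in(0,1)$. The system evolves as $x_{t+1}\sim P(\cdot\mid x_t,u_t)$, $y_t\sim O(\cdot\mid x_t)$, and at time $t$ the controller has the IO history $\zeta_t=(y_{0:t},u_{0:t-1})$. The belief is $b_t:=\mathbb P(x_t\in\cdot\mid\zeta_t)$. A belief-based policy $\pi$ selects $u_t=\pi(b_t)$; all processes generated in closed loop under $\pi$ live on one probability space with law $\mathbb P_\pi$ and expectation $\mathbb E_\pi$, and the resulting belief process is denoted $b_t^\pi$. For a memory length $H\ge0$, the truncated IO history is $\zeta_t^{(H)}:=(y_{\max(t-H,0):t},u_{\max(t-H,0):t-1})$ and the finite memory belief approximation is $\hat b_t^{(H),\pi}:=\mathbb P_\pi(x_t\in\cdot\mid\zeta_t^{(H)})$. $W_2$ is the Wasserstein-2 distance on probability measures on $\mathcal X$ with finite second moment. The policy-conditional belief mismatch is $\varepsilon_H(\pi):=\sup_{t\ge0}\mathbb E_\pi\big[W_2(b_t^\pi,\hat b_t^{(H),\pi})\big]$. The belief-level cost is $\bar c(b,u):=\int_{\mathcal X}c(x,u)\,b(dx)$. The true-belief cost is $J(\pi):=\mathbb E_\pi\big[\sum_{t\ge0}\gamma^t\bar c(b_t^\pi,u_t)\big]$ and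 the finite memory cost under the same closed-loop execution (same inputs $u_t=\pi(b_t^\pi)$) is $\hat J_H(\pi):=\mathbb E_\pi\big[\sum_{t\ge0}\gamma^t\bar c(\hat b_t^{(H),\pi},u_t)\big]$. *)

theory Defs
  imports "HOL-Probability.Probability"
begin

definition pre_sets :: "'w measure \<Rightarrow> ('w \<Rightarrow> 'v::topological_space) \<Rightarrow> 'w set set" where
  "pre_sets M f = {f -` A \<inter> space M | A. A \<in> sets borel}"

(* sigma-algebra generated by the (truncated) IO history y_{s..t}, u_{s..t-1} *)
definition hist_alg :: "'w measure \<Rightarrow> (nat \<Rightarrow> 'w \<Rightarrow> 'c::topological_space)
    \<Rightarrow> (nat \<Rightarrow> 'w \<Rightarrow> 'b::topological_space) \<Rightarrow> nat \<Rightarrow> nat \<Rightarrow> 'w measure" where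
  "hist_alg M y u s t = sigma (space M)
     ((\<Union>k\<in>{s..t}. pre_sets M (y k)) \<union> (\<Union>k\<in>{s..<t}. pre_sets M (u k)))"

definition cond_distr :: "'w measure \<Rightarrow> 'w measure \<Rightarrow> ('w \<Rightarrow> 'v::topological_space)
    \<Rightarrow> ('w \<Rightarrow> 'v measure) \<Rightarrow> bool" where
  "cond_distr M F X B \<longleftrightarrow> space F = space M \<and> sets F \<subseteq> sets M \<and> X \<in> borel_measurable M \<and>
     B \<in> measurable F (prob_algebra borel) \<and>
     (\<forall>A\<in>sets borel. \<forall>G\<in>sets F.
        emeasure M (G \<inter> X -` A) = (\<integral>\<^sup>+ \<omega>. indicator G \<omega> * emeasure (B \<omega>) A \<partial>M))"

definition couplings :: "'a::euclidean_space measure \<Rightarrow> 'a measure \<Rightarrow> ('a \<times> 'a) measure set" where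
  "couplings \<mu> \<nu> = {\<gamma>. prob_space \<gamma> \<and> sets \<gamma> = sets (borel \<Otimes>\<^sub>M borel) \<and>
       distr \<gamma> borel fst = \<mu> \<and> distr \<gamma> borel snd = \<nu>}"

(* Wasserstein-2 distance (meaningful for measures with finite second moment) *)
definition W2 :: "'a::euclidean_space measure \<Rightarrow> 'a measure \<Rightarrow> real" where
  "W2 \<mu> \<nu> = sqrt (enn2real (INF \<gamma>\<in>couplings \<mu> \<nu>.
      \<integral>\<^sup>+ p. ennreal ((norm (fst p - snd p))\<^sup>2) \<partial>\<gamma>))"

definition cbar :: "('a::euclidean_space \<Rightarrow> 'b \<Rightarrow> real) \<Rightarrow> 'a measure \<Rightarrow> 'b \<Rightarrow> real" where
  "cbar c b v = (\<integral>x. c x v \<partial>b)"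

definition disc_cost :: "'w measure \<Rightarrow> real \<Rightarrow> ('a::euclidean_space \<Rightarrow> 'b \<Rightarrow> real)
    \<Rightarrow> (nat \<Rightarrow> 'w \<Rightarrow> 'a measure) \<Rightarrow> (nat \<Rightarrow> 'w \<Rightarrow> 'b) \<Rightarrow> real" where
  "disc_cost M g c bb u = (\<integral>\<omega>. (\<Sum>t. g ^ t * cbar c (bb t \<omega>) (u t \<omega>)) \<partial>M)"

definition belief_mismatch :: "'w measure \<Rightarrow> (nat \<Rightarrow> 'w \<Rightarrow> 'a::euclidean_space measure)
    \<Rightarrow> (nat \<Rightarrow> 'w \<Rightarrow> 'a measure) \<Rightarrow> ennreal" where
  "belief_mismatch M b bh = (SUP t. \<integral>\<^sup>+ \<omega>. ennreal (W2 (b t \<omega>) (bh t \<omega>)) \<partial>M)"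

end

theory Submission
  imports Defs
begin

(* For a fixed input v the mean value theorem on the convex set X gives
   |c(x,v) - c(y,v)| <= Kg (1 + |v| + |x| + |y|) |x - y|.  Integrating this against an arbitrary
   coupling of b_t and bhat_t and applying Cauchy-Schwarz bounds the squared gap of the belief-level
   costs by Kg^2 (2 (1 + |v|)^2 + 8 M) times the transport cost of the coupling; the infimum over
   couplings turns this into |cbar(b_t, u_t) - cbar(bhat_t, u_t)| <= L (1 + U) W2(b_t, bhat_t)
   almost surely.  Summing the discounted gaps and taking expectations produces the factor
   1 / (1 - gamma) in front of sup_t E W2(b_t, bhat_t). *)

lemma abs_diff_le_of_derivative_growth:
  fixes f :: "'a::euclidean_space \<Rightarrow> real" and D :: "'a \<Rightarrow> 'a"
  assumes "convex X"
    and der: "\<And>z. z \<in> X \<Longrightarrow> (f has_derivative (\<lambda>h. D z \<bullet> h)) (at z within X)"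
    and D_growth: "\<And>z. z \<in> X \<Longrightarrow> norm (D z) \<le> K * (a + norm z)"
    and "x \<in> X" "y \<in> X" "K \<ge> 0" "a \<ge> 0"
  shows "\<bar>f x - f y\<bar> \<le> K * (a + norm x + norm y) * norm (x - y)"
proof -
  have seg: "closed_segment x y \<subseteq> X"
    using assms by (simp add: closed_segment_subset)
  have "norm (f x - f y) \<le> K * (a + norm x + norm y) * norm (x - y)"
  proof (rule differentiable_bound[where f'="\<lambda>z h. D z \<bullet> h"])
    show "(f has_derivative (\<lambda>h. D z \<bullet> h)) (at z within closed_segment x y)"
      if "z \<in> closed_segment x y" for z
      using der seg that by (auto intro: has_derivative_subset)
    show "onorm (\<lambda>h. D z \<bullet> h) \<le> K * (a + norm x + norm y)"
      if z: "z \<in> closed_segment x y" for z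
    proof (rule onorm_le)
      fix h
      obtain s where s: "0 \<le> s" "s \<le> 1" "z = (1 - s) *\<^sub>R x + s *\<^sub>R y"
        using z by (auto simp: in_segment)
      have "norm z \<le> (1 - s) * norm x + s * norm y"
        using s norm_triangle_ineq[of "(1 - s) *\<^sub>R x" "s *\<^sub>R y"] by simp
      also have "\<dots> \<le> norm x + norm y"
        using s by (intro add_mono mult_left_le_one_le) auto
      finally have "K * (a + norm z) \<le> K * (a + norm x + norm y)"
        using \<open>K \<ge> 0\<close> by (intro mult_left_mono) auto
      moreover have "norm (D z \<bullet> h) \<le> norm (D z) * norm h"
        by (simp add: Cauchy_Schwarz_ineq2)
      moreover have "norm (D z) \<le> K * (a + norm z)"
        using D_growth seg z by blast
      ultimately show "norm (D z \<bullet> h) \<le> K * (a + norm x + norm y) * norm h"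
        by (meson mult_right_mono norm_ge_zero order_trans)
    qed
  qed (use assms in auto)
  then show ?thesis by simp
qed

section \<open>Couplings and the Wasserstein distance\<close>

lemma couplingsD:
  assumes "\<gamma> \<in> couplings \<mu> \<nu>"
  shows "prob_space \<gamma>" "sets \<gamma> = sets (borel \<Otimes>\<^sub>M borel)"
    "distr \<gamma> borel fst = \<mu>" "distr \<gamma> borel snd = \<nu>"
    "fst \<in> measurable \<gamma> borel" "snd \<in> measurable \<gamma> borel"
  using assms unfolding couplings_def
  by (auto simp: measurable_cong_sets[OF _ refl, of \<gamma> "borel \<Otimes>\<^sub>M borel"])

lemma nn_integral_coupling:
  assumes "\<gamma> \<in> couplings \<mu> \<nu>" and "h \<in> borel_measurable borel"
  shows "(\<integral>\<^sup>+ p. h (fst p) \<partial>\<gamma>) = (\<integral>\<^sup>+ z. h z \<partial>\<mu>)"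
    and "(\<integral>\<^sup>+ p. h (snd p) \<partial>\<gamma>) = (\<integral>\<^sup>+ z. h z \<partial>\<nu>)"
proof -
  note c = couplingsD[OF assms(1)]
  have "h \<in> borel_measurable (distr \<gamma> borel fst)" "h \<in> borel_measurable (distr \<gamma> borel snd)"
    using assms(2) by simp_all
  from nn_integral_distr[OF c(5) this(1)] nn_integral_distr[OF c(6) this(2)]
  show "(\<integral>\<^sup>+ p. h (fst p) \<partial>\<gamma>) = (\<integral>\<^sup>+ z. h z \<partial>\<mu>)"
    and "(\<integral>\<^sup>+ p. h (snd p) \<partial>\<gamma>) = (\<integral>\<^sup>+ z. h z \<partial>\<nu>)"
    unfolding c(3,4) by simp_all
qed

lemma integral_coupling:
  fixes h :: "'a::euclidean_space \<Rightarrow> real"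
  assumes "\<gamma> \<in> couplings \<mu> \<nu>" and "h \<in> borel_measurable borel"
  shows "integral\<^sup>L \<gamma> (\<lambda>p. h (fst p)) = integral\<^sup>L \<mu> h"
    and "integral\<^sup>L \<gamma> (\<lambda>p. h (snd p)) = integral\<^sup>L \<nu> h"
    and "integrable \<mu> h \<Longrightarrow> integrable \<gamma> (\<lambda>p. h (fst p))"
    and "integrable \<nu> h \<Longrightarrow> integrable \<gamma> (\<lambda>p. h (snd p))"
  using integral_distr[OF couplingsD(5)[OF assms(1)] assms(2)]
    integral_distr[OF couplingsD(6)[OF assms(1)] assms(2)]
    integrable_distr_eq[OF couplingsD(5)[OF assms(1)] assms(2)]
    integrable_distr_eq[OF couplingsD(6)[OF assms(1)] assms(2)]
  by (simp_all add: couplingsD(3,4)[OF assms(1)])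

lemma AE_coupling:
  fixes X :: "'a::euclidean_space set"
  assumes "\<gamma> \<in> couplings \<mu> \<nu>" and "X \<in> sets borel"
    and "AE z in \<mu>. z \<in> X" and "AE z in \<nu>. z \<in> X"
  shows "AE p in \<gamma>. fst p \<in> X \<and> snd p \<in> X"
proof -
  note c = couplingsD[OF assms(1)]
  have "AE z in distr \<gamma> borel fst. z \<in> X" "AE z in distr \<gamma> borel snd. z \<in> X"
    unfolding c(3,4) using assms(3,4) .
  then have "AE p in \<gamma>. fst p \<in> X" "AE p in \<gamma>. snd p \<in> X"
    using AE_distr_iff[OF c(5), of "\<lambda>z. z \<in> X"] AE_distr_iff[OF c(6), of "\<lambda>z. z \<in> X"] assms(2)
    by simp_all
  then show ?thesis by eventually_elim simp
qed

lemma pair_measure_in_couplings: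
  fixes \<mu> \<nu> :: "'a::euclidean_space measure"
  assumes "prob_space \<mu>" "prob_space \<nu>"
    and sets_\<mu>: "sets \<mu> = sets borel" and sets_\<nu>: "sets \<nu> = sets borel"
  shows "\<mu> \<Otimes>\<^sub>M \<nu> \<in> couplings \<mu> \<nu>"
proof -
  interpret pair_prob_space \<mu> \<nu>
    using assms by (simp add: pair_prob_space_def pair_sigma_finite_def prob_space_imp_sigma_finite)
  have "distr (\<mu> \<Otimes>\<^sub>M \<nu>) borel fst = distr (\<mu> \<Otimes>\<^sub>M \<nu>) \<mu> fst"
    by (rule distr_cong) (auto simp: sets_\<mu>)
  moreover have "distr (\<mu> \<Otimes>\<^sub>M \<nu>) borel snd = distr (\<nu> \<Otimes>\<^sub>M \<mu>) \<nu> fst"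
  proof -
    have "distr (\<mu> \<Otimes>\<^sub>M \<nu>) borel snd = distr (\<mu> \<Otimes>\<^sub>M \<nu>) \<nu> snd"
      by (rule distr_cong) (auto simp: sets_\<nu>)
    also have "\<dots> = distr (distr (\<nu> \<Otimes>\<^sub>M \<mu>) (\<mu> \<Otimes>\<^sub>M \<nu>) (\<lambda>(x, y). (y, x))) \<nu> snd"
      by (simp add: distr_pair_swap[symmetric])
    also have "\<dots> = distr (\<nu> \<Otimes>\<^sub>M \<mu>) \<nu> fst"
      by (subst distr_distr) (auto simp: comp_def case_prod_beta)
    finally show ?thesis .
  qed
  ultimately show ?thesis
    unfolding couplings_def
    using prob_space_axioms sets_pair_measure_cong[OF sets_\<mu> sets_\<nu>]
    by (simp add: M1.distr_pair_fst M2.distr_pair_fst)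
qed

lemma integrable_of_quadratic_growth:
  fixes \<mu> :: "'a::euclidean_space measure" and f :: "'a \<Rightarrow> real"
  assumes "prob_space \<mu>" and sets_\<mu>: "sets \<mu> = sets borel" and "AE z in \<mu>. z \<in> X"
    and moment: "(\<integral>\<^sup>+ z. ennreal ((norm z)\<^sup>2) \<partial>\<mu>) \<le> ennreal m" and "m \<ge> 0"
    and f: "f \<in> borel_measurable borel"
    and growth: "\<And>z. z \<in> X \<Longrightarrow> \<bar>f z\<bar> \<le> A + B * (norm z)\<^sup>2" and "B \<ge> 0"
  shows "integrable \<mu> f" and "\<bar>integral\<^sup>L \<mu> f\<bar> \<le> A + B * m"
proof -
  interpret prob_space \<mu> by fact
  have [measurable]: "f \<in> borel_measurable \<mu>" "(\<lambda>z. (norm z)\<^sup>2) \<in> borel_measurable \<mu>"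
    using f by (simp_all add: measurable_cong_sets[OF sets_\<mu> refl])
  have "(\<integral>\<^sup>+ z. ennreal ((norm z)\<^sup>2) \<partial>\<mu>) < \<infinity>"
    using moment by (simp add: le_less_trans)
  then have sq: "integrable \<mu> (\<lambda>z. (norm z)\<^sup>2)"
    by (intro integrableI_bounded) simp_all
  have "ennreal (\<integral>z. (norm z)\<^sup>2 \<partial>\<mu>) \<le> ennreal m"
    using moment by (simp add: nn_integral_eq_integral[OF sq, symmetric])
  then have sq_le: "(\<integral>z. (norm z)\<^sup>2 \<partial>\<mu>) \<le> m"
    using \<open>m \<ge> 0\<close> by simp
  have dom: "integrable \<mu> (\<lambda>z. A + B * (norm z)\<^sup>2)"
    using sq by simp
  have le_dom: "AE z in \<mu>. \<bar>f z\<bar> \<le> A + B * (norm z)\<^sup>2"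
    using \<open>AE z in \<mu>. z \<in> X\<close> by eventually_elim (rule growth)
  show f_int: "integrable \<mu> f"
    by (rule Bochner_Integration.integrable_bound[OF dom]) (use le_dom in \<open>auto elim: AE_mp\<close>)
  have "\<bar>integral\<^sup>L \<mu> f\<bar> \<le> (\<integral>z. \<bar>f z\<bar> \<partial>\<mu>)"
    by (rule integral_abs_bound)
  also have "\<dots> \<le> (\<integral>z. A + B * (norm z)\<^sup>2 \<partial>\<mu>)"
    using f_int dom le_dom by (intro integral_mono_AE) auto
  also have "\<dots> = A + B * (\<integral>z. (norm z)\<^sup>2 \<partial>\<mu>)"
    using sq by (simp add: prob_space)
  also have "\<dots> \<le> A + B * m"
    using sq_le \<open>B \<ge> 0\<close> by (simp add: mult_left_mono)
  finally show "\<bar>integral\<^sup>L \<mu> f\<bar> \<le> A + B * m" .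
qed

lemma nn_integral_coupling_transport_cost_finite:
  fixes \<mu> \<nu> :: "'a::euclidean_space measure"
  assumes \<gamma>: "\<gamma> \<in> couplings \<mu> \<nu>"
    and "(\<integral>\<^sup>+ z. ennreal ((norm z)\<^sup>2) \<partial>\<mu>) < \<infinity>" "(\<integral>\<^sup>+ z. ennreal ((norm z)\<^sup>2) \<partial>\<nu>) < \<infinity>"
  shows "(\<integral>\<^sup>+ p. ennreal ((norm (fst p - snd p))\<^sup>2) \<partial>\<gamma>) < \<infinity>"
proof -
  have meas: "(\<lambda>p::'a \<times> 'a. ennreal ((norm (fst p))\<^sup>2)) \<in> borel_measurable \<gamma>"
    "(\<lambda>p::'a \<times> 'a. ennreal ((norm (snd p))\<^sup>2)) \<in> borel_measurable \<gamma>"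
    by (simp_all add: measurable_cong_sets[OF couplingsD(2)[OF \<gamma>] refl])
  have norm_sq: "(\<lambda>z::'a. ennreal ((norm z)\<^sup>2)) \<in> borel_measurable borel"
    by measurable
  have "(\<integral>\<^sup>+ p. ennreal ((norm (fst p - snd p))\<^sup>2) \<partial>\<gamma>)
      \<le> (\<integral>\<^sup>+ p. 2 * ennreal ((norm (fst p))\<^sup>2) + 2 * ennreal ((norm (snd p))\<^sup>2) \<partial>\<gamma>)"
  proof (rule nn_integral_mono)
    fix p :: "'a \<times> 'a"
    have "(norm (fst p - snd p))\<^sup>2 \<le> (norm (fst p) + norm (snd p))\<^sup>2"
      by (intro power_mono norm_triangle_ineq4) simp
    also have "\<dots> \<le> 2 * (norm (fst p))\<^sup>2 + 2 * (norm (snd p))\<^sup>2"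
      by (smt (verit) power2_sum zero_le_power2 power2_diff)
    finally have "ennreal ((norm (fst p - snd p))\<^sup>2)
        \<le> ennreal (2 * (norm (fst p))\<^sup>2 + 2 * (norm (snd p))\<^sup>2)"
      by (rule ennreal_leI)
    then show "ennreal ((norm (fst p - snd p))\<^sup>2)
        \<le> 2 * ennreal ((norm (fst p))\<^sup>2) + 2 * ennreal ((norm (snd p))\<^sup>2)"
      by (simp add: ennreal_mult)
  qed
  also have "\<dots> = 2 * (\<integral>\<^sup>+ z. ennreal ((norm z)\<^sup>2) \<partial>\<mu>) + 2 * (\<integral>\<^sup>+ z. ennreal ((norm z)\<^sup>2) \<partial>\<nu>)"
    using meas by (simp add: nn_integral_add nn_integral_cmult nn_integral_coupling[OF \<gamma> norm_sq])
  also have "\<dots> < \<infinity>"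
    using assms(2,3) by (simp add: ennreal_mult_less_top)
  finally show ?thesis .
qed

(* W2 is sqrt (enn2real INF ...) and enn2real maps infinity to 0, so a coupling of finite cost
   is needed to exclude the junk value W2 = 0. *)
lemma le_W2I:
  fixes \<mu> \<nu> :: "'a::euclidean_space measure"
  assumes bound: "\<And>\<gamma>. \<gamma> \<in> couplings \<mu> \<nu> \<Longrightarrow>
      ennreal (D\<^sup>2) \<le> ennreal C * (\<integral>\<^sup>+ p. ennreal ((norm (fst p - snd p))\<^sup>2) \<partial>\<gamma>)"
    and "\<gamma>\<^sub>0 \<in> couplings \<mu> \<nu>" and "(\<integral>\<^sup>+ p. ennreal ((norm (fst p - snd p))\<^sup>2) \<partial>\<gamma>\<^sub>0) < \<infinity>"
    and "C > 0" and "D \<ge> 0"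
  shows "D \<le> sqrt C * W2 \<mu> \<nu>"
proof -
  define J where "J = (INF \<gamma>\<in>couplings \<mu> \<nu>. \<integral>\<^sup>+ p. ennreal ((norm (fst p - snd p))\<^sup>2) \<partial>\<gamma>)"
  have "ennreal (D\<^sup>2 / C) \<le> J"
    unfolding J_def
  proof (rule INF_greatest)
    fix \<gamma> assume "\<gamma> \<in> couplings \<mu> \<nu>"
    then have "ennreal (D\<^sup>2) / ennreal C
        \<le> (\<integral>\<^sup>+ p. ennreal ((norm (fst p - snd p))\<^sup>2) \<partial>\<gamma>) * ennreal C / ennreal C"
      by (metis bound divide_right_mono_ennreal mult.commute)
    then show "ennreal (D\<^sup>2 / C) \<le> (\<integral>\<^sup>+ p. ennreal ((norm (fst p - snd p))\<^sup>2) \<partial>\<gamma>)"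
      using \<open>C > 0\<close> by (simp add: divide_ennreal ennreal_mult_divide_eq)
  qed
  moreover have "J < \<infinity>"
    unfolding J_def using assms(2,3) by (meson INF_lower le_less_trans)
  ultimately have "enn2real (ennreal (D\<^sup>2 / C)) \<le> enn2real J"
    by (metis enn2real_mono infinity_ennreal_def)
  then have "D\<^sup>2 / C \<le> enn2real J"
    using \<open>C > 0\<close> by simp
  then have "D\<^sup>2 \<le> (sqrt C * sqrt (enn2real J))\<^sup>2"
    using \<open>C > 0\<close> by (simp add: power_mult_distrib divide_le_eq mult.commute)
  then show ?thesis
    unfolding W2_def J_def[symmetric] by (rule power2_le_imp_le) (use \<open>C > 0\<close> in simp)
qed

lemma nn_integral_coupling_affine_norm_sq_le:
  fixes \<mu> \<nu> :: "'a::euclidean_space measure"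
  assumes \<gamma>: "\<gamma> \<in> couplings \<mu> \<nu>"
    and "(\<integral>\<^sup>+ z. ennreal ((norm z)\<^sup>2) \<partial>\<mu>) \<le> ennreal m"
    and "(\<integral>\<^sup>+ z. ennreal ((norm z)\<^sup>2) \<partial>\<nu>) \<le> ennreal m"
    and "m \<ge> 0"
  shows "(\<integral>\<^sup>+ p. ennreal ((a + norm (fst p) + norm (snd p))\<^sup>2) \<partial>\<gamma>) \<le> ennreal (2 * a\<^sup>2 + 8 * m)"
proof -
  have norm_sq: "(\<lambda>z::'a. ennreal ((norm z)\<^sup>2)) \<in> borel_measurable borel"
    by measurable
  have meas: "(\<lambda>p::'a \<times> 'a. ennreal ((norm (fst p))\<^sup>2)) \<in> borel_measurable \<gamma>"
    "(\<lambda>p::'a \<times> 'a. ennreal ((norm (snd p))\<^sup>2)) \<in> borel_measurable \<gamma>"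
    by (simp_all add: measurable_cong_sets[OF couplingsD(2)[OF \<gamma>] refl])
  interpret prob_space \<gamma>
    using couplingsD(1)[OF \<gamma>] .
  have "(\<integral>\<^sup>+ p. ennreal ((a + norm (fst p) + norm (snd p))\<^sup>2) \<partial>\<gamma>)
      \<le> (\<integral>\<^sup>+ p. ennreal (2 * a\<^sup>2) + 4 * ennreal ((norm (fst p))\<^sup>2) + 4 * ennreal ((norm (snd p))\<^sup>2) \<partial>\<gamma>)"
  proof (rule nn_integral_mono)
    fix p :: "'a \<times> 'a"
    have "(a + norm (fst p) + norm (snd p))\<^sup>2 \<le> 2 * a\<^sup>2 + 4 * (norm (fst p))\<^sup>2 + 4 * (norm (snd p))\<^sup>2"
      by (smt (verit) sum_squares_bound power2_sum zero_le_power2 power2_diff)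
    then have "ennreal ((a + norm (fst p) + norm (snd p))\<^sup>2)
        \<le> ennreal (2 * a\<^sup>2 + 4 * (norm (fst p))\<^sup>2 + 4 * (norm (snd p))\<^sup>2)"
      by (rule ennreal_leI)
    then show "ennreal ((a + norm (fst p) + norm (snd p))\<^sup>2)
        \<le> ennreal (2 * a\<^sup>2) + 4 * ennreal ((norm (fst p))\<^sup>2) + 4 * ennreal ((norm (snd p))\<^sup>2)"
      by (simp add: ennreal_mult)
  qed
  also have "\<dots> = ennreal (2 * a\<^sup>2) + 4 * (\<integral>\<^sup>+ z. ennreal ((norm z)\<^sup>2) \<partial>\<mu>)
      + 4 * (\<integral>\<^sup>+ z. ennreal ((norm z)\<^sup>2) \<partial>\<nu>)"
    using meas by (simp add: nn_integral_add nn_integral_cmult nn_integral_coupling[OF \<gamma> norm_sq]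
        emeasure_space_1)
  also have "\<dots> \<le> ennreal (2 * a\<^sup>2) + 4 * ennreal m + 4 * ennreal m"
    using assms(2,3) by (intro add_mono mult_left_mono) auto
  also have "\<dots> = ennreal (2 * a\<^sup>2 + 8 * m)"
    using \<open>m \<ge> 0\<close> by (simp add: ennreal_mult flip: distrib_right)
  finally show ?thesis .
qed

lemma sq_integral_diff_le_transport_cost:
  fixes f :: "'a::euclidean_space \<Rightarrow> real" and Df :: "'a \<Rightarrow> 'a"
  assumes \<gamma>: "\<gamma> \<in> couplings \<mu> \<nu>"
    and "X \<in> sets borel" and "convex X" and "AE z in \<mu>. z \<in> X" and "AE z in \<nu>. z \<in> X"
    and f: "f \<in> borel_measurable borel" "integrable \<mu> f" "integrable \<nu> f"
    and der: "\<And>z. z \<in> X \<Longrightarrow> (f has_derivative (\<lambda>h. Df z \<bullet> h)) (at z within X)"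
    and Df_growth: "\<And>z. z \<in> X \<Longrightarrow> norm (Df z) \<le> K * (a + norm z)"
    and "K \<ge> 0" "a \<ge> 0"
    and moments: "(\<integral>\<^sup>+ z. ennreal ((norm z)\<^sup>2) \<partial>\<mu>) \<le> ennreal m"
      "(\<integral>\<^sup>+ z. ennreal ((norm z)\<^sup>2) \<partial>\<nu>) \<le> ennreal m" and "m \<ge> 0"
  shows "ennreal ((integral\<^sup>L \<mu> f - integral\<^sup>L \<nu> f)\<^sup>2)
    \<le> ennreal (K\<^sup>2 * (2 * a\<^sup>2 + 8 * m)) * (\<integral>\<^sup>+ p. ennreal ((norm (fst p - snd p))\<^sup>2) \<partial>\<gamma>)"
proof -
  define F where "F p = ennreal (K * (a + norm (fst p) + norm (snd p)))" for p :: "'a \<times> 'a"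
  define G where "G p = ennreal (norm (fst p - snd p))" for p :: "'a \<times> 'a"
  have [measurable]: "F \<in> borel_measurable \<gamma>" "G \<in> borel_measurable \<gamma>"
    unfolding F_def G_def by (simp_all add: measurable_cong_sets[OF couplingsD(2)[OF \<gamma>] refl])
  have "integral\<^sup>L \<mu> f - integral\<^sup>L \<nu> f = (\<integral>p. f (fst p) - f (snd p) \<partial>\<gamma>)"
    using integral_coupling[OF \<gamma> f(1)] f by simp
  then have "ennreal \<bar>integral\<^sup>L \<mu> f - integral\<^sup>L \<nu> f\<bar> \<le> (\<integral>\<^sup>+ p. ennreal \<bar>f (fst p) - f (snd p)\<bar> \<partial>\<gamma>)"
    using integral_norm_bound_ennreal[of \<gamma> "\<lambda>p. f (fst p) - f (snd p)"]
      integral_coupling(3,4)[OF \<gamma> f(1)] f by simp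
  also have "\<dots> \<le> (\<integral>\<^sup>+ p. F p * G p \<partial>\<gamma>)"
    using AE_coupling[OF \<gamma> assms(2,4,5)]
  proof (rule nn_integral_mono_AE[OF AE_mp], intro AE_I2 impI)
    fix p :: "'a \<times> 'a" assume "fst p \<in> X \<and> snd p \<in> X"
    then have "\<bar>f (fst p) - f (snd p)\<bar> \<le> K * (a + norm (fst p) + norm (snd p)) * norm (fst p - snd p)"
      using abs_diff_le_of_derivative_growth[OF \<open>convex X\<close> der Df_growth] \<open>K \<ge> 0\<close> \<open>a \<ge> 0\<close> by blast
    then show "ennreal \<bar>f (fst p) - f (snd p)\<bar> \<le> F p * G p"
      unfolding F_def G_def using \<open>K \<ge> 0\<close> \<open>a \<ge> 0\<close> by (simp add: ennreal_leI flip: ennreal_mult)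
  qed
  finally have "(ennreal \<bar>integral\<^sup>L \<mu> f - integral\<^sup>L \<nu> f\<bar>)\<^sup>2 \<le> (\<integral>\<^sup>+ p. F p * G p \<partial>\<gamma>)\<^sup>2"
    by (rule power_mono) simp
  also have "\<dots> \<le> (\<integral>\<^sup>+ p. F p ^ 2 \<partial>\<gamma>) * (\<integral>\<^sup>+ p. G p ^ 2 \<partial>\<gamma>)"
    by (rule Cauchy_Schwarz_nn_integral) measurable
  finally have CS: "ennreal ((integral\<^sup>L \<mu> f - integral\<^sup>L \<nu> f)\<^sup>2)
      \<le> (\<integral>\<^sup>+ p. F p ^ 2 \<partial>\<gamma>) * (\<integral>\<^sup>+ p. G p ^ 2 \<partial>\<gamma>)"
    by (simp add: ennreal_power)
  have "(\<integral>\<^sup>+ p. F p ^ 2 \<partial>\<gamma>)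
      = (\<integral>\<^sup>+ p. ennreal (K\<^sup>2) * ennreal ((a + norm (fst p) + norm (snd p))\<^sup>2) \<partial>\<gamma>)"
    unfolding F_def using \<open>K \<ge> 0\<close> \<open>a \<ge> 0\<close>
    by (simp add: ennreal_power power_mult_distrib ennreal_mult del: ennreal_plus)
  also have "\<dots> = ennreal (K\<^sup>2) * (\<integral>\<^sup>+ p. ennreal ((a + norm (fst p) + norm (snd p))\<^sup>2) \<partial>\<gamma>)"
    by (simp add: nn_integral_cmult measurable_cong_sets[OF couplingsD(2)[OF \<gamma>] refl])
  also have "\<dots> \<le> ennreal (K\<^sup>2) * ennreal (2 * a\<^sup>2 + 8 * m)"
    by (intro mult_left_mono nn_integral_coupling_affine_norm_sq_le[OF \<gamma> moments \<open>m \<ge> 0\<close>]) simp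
  finally have F_sq: "(\<integral>\<^sup>+ p. F p ^ 2 \<partial>\<gamma>) \<le> ennreal (K\<^sup>2 * (2 * a\<^sup>2 + 8 * m))"
    using \<open>m \<ge> 0\<close> by (simp add: ennreal_mult del: ennreal_plus)
  have G_sq: "(\<integral>\<^sup>+ p. G p ^ 2 \<partial>\<gamma>) = (\<integral>\<^sup>+ p. ennreal ((norm (fst p - snd p))\<^sup>2) \<partial>\<gamma>)"
    unfolding G_def by (simp add: ennreal_power)
  show ?thesis
    using CS mult_right_mono[OF F_sq] unfolding G_sq by (meson order_trans zero_le)
qed

lemma abs_integral_diff_le_W2:
  fixes \<mu> \<nu> :: "'a::euclidean_space measure" and f :: "'a \<Rightarrow> real" and Df :: "'a \<Rightarrow> 'a"
  assumes "prob_space \<mu>" "prob_space \<nu>" and "sets \<mu> = sets borel" "sets \<nu> = sets borel"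
    and "X \<in> sets borel" and "convex X" and "AE z in \<mu>. z \<in> X" and "AE z in \<nu>. z \<in> X"
    and f: "f \<in> borel_measurable borel" "integrable \<mu> f" "integrable \<nu> f"
    and der: "\<And>z. z \<in> X \<Longrightarrow> (f has_derivative (\<lambda>h. Df z \<bullet> h)) (at z within X)"
    and Df_growth: "\<And>z. z \<in> X \<Longrightarrow> norm (Df z) \<le> K * (a + norm z)"
    and "K > 0" "a \<ge> 0"
    and moments: "(\<integral>\<^sup>+ z. ennreal ((norm z)\<^sup>2) \<partial>\<mu>) \<le> ennreal m"
      "(\<integral>\<^sup>+ z. ennreal ((norm z)\<^sup>2) \<partial>\<nu>) \<le> ennreal m" and "m > 0"
  shows "\<bar>integral\<^sup>L \<mu> f - integral\<^sup>L \<nu> f\<bar> \<le> K * sqrt (2 * a\<^sup>2 + 8 * m) * W2 \<mu> \<nu>"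
proof -
  have "\<bar>integral\<^sup>L \<mu> f - integral\<^sup>L \<nu> f\<bar> \<le> sqrt (K\<^sup>2 * (2 * a\<^sup>2 + 8 * m)) * W2 \<mu> \<nu>"
  proof (rule le_W2I)
    show "ennreal (\<bar>integral\<^sup>L \<mu> f - integral\<^sup>L \<nu> f\<bar>\<^sup>2)
        \<le> ennreal (K\<^sup>2 * (2 * a\<^sup>2 + 8 * m)) * (\<integral>\<^sup>+ p. ennreal ((norm (fst p - snd p))\<^sup>2) \<partial>\<gamma>)"
      if "\<gamma> \<in> couplings \<mu> \<nu>" for \<gamma>
      using sq_integral_diff_le_transport_cost[OF that assms(5-8) f der Df_growth _ _ moments]
        \<open>K > 0\<close> \<open>a \<ge> 0\<close> \<open>m > 0\<close> by simp
    show "\<mu> \<Otimes>\<^sub>M \<nu> \<in> couplings \<mu> \<nu>"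
      using assms(1-4) by (rule pair_measure_in_couplings)
    have "(\<integral>\<^sup>+ z. ennreal ((norm z)\<^sup>2) \<partial>\<mu>) < \<infinity>" "(\<integral>\<^sup>+ z. ennreal ((norm z)\<^sup>2) \<partial>\<nu>) < \<infinity>"
      using moments by (simp_all add: le_less_trans)
    then show "(\<integral>\<^sup>+ p. ennreal ((norm (fst p - snd p))\<^sup>2) \<partial>(\<mu> \<Otimes>\<^sub>M \<nu>)) < \<infinity>"
      by (rule nn_integral_coupling_transport_cost_finite[OF \<open>\<mu> \<Otimes>\<^sub>M \<nu> \<in> couplings \<mu> \<nu>\<close>])
    show "K\<^sup>2 * (2 * a\<^sup>2 + 8 * m) > 0"
      using \<open>K > 0\<close> \<open>m > 0\<close> by (simp add: add_nonneg_pos)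
  qed simp
  then show ?thesis
    using \<open>K > 0\<close> by (simp add: real_sqrt_mult)
qed

(* Turns the constant of abs_integral_diff_le_W2 for a = 1 + norm v into L_pi (1 + U_pi). *)
lemma sqrt_lipschitz_constant_le:
  fixes s U m :: real
  assumes "s \<ge> 0" "s\<^sup>2 \<le> U" "m \<ge> 0"
  shows "sqrt (2 * (1 + s)\<^sup>2 + 8 * m) \<le> sqrt (3 + 24 * m) * (1 + U)"
proof -
  have "U \<ge> 0"
    using assms(2) zero_le_power2[of s] by linarith
  have "3 * (1 + s\<^sup>2)\<^sup>2 - 2 * (1 + s)\<^sup>2 = (1 - 2 * s)\<^sup>2 + 3 * s ^ 4"
    by (simp add: power2_eq_square power4_eq_xxxx algebra_simps)
  moreover have "(1 - 2 * s)\<^sup>2 + 3 * s ^ 4 \<ge> 0"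
    by simp
  ultimately have "2 * (1 + s)\<^sup>2 \<le> 3 * (1 + s\<^sup>2)\<^sup>2"
    by linarith
  also have "\<dots> \<le> 3 * (1 + U)\<^sup>2"
    using assms by (intro mult_left_mono power_mono) auto
  finally have "2 * (1 + s)\<^sup>2 \<le> 3 * (1 + U)\<^sup>2" .
  moreover have "m * 1 \<le> m * (1 + U)\<^sup>2"
    using \<open>U \<ge> 0\<close> \<open>m \<ge> 0\<close> by (intro mult_left_mono one_le_power) auto
  moreover have "(3 + 24 * m) * (1 + U)\<^sup>2 = 3 * (1 + U)\<^sup>2 + 24 * (m * (1 + U)\<^sup>2)"
    by (simp add: algebra_simps)
  ultimately have "2 * (1 + s)\<^sup>2 + 8 * m \<le> (3 + 24 * m) * (1 + U)\<^sup>2"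
    using \<open>m \<ge> 0\<close> by linarith
  then have "sqrt (2 * (1 + s)\<^sup>2 + 8 * m) \<le> sqrt ((3 + 24 * m) * (1 + U)\<^sup>2)"
    by (rule real_sqrt_le_mono)
  also have "\<dots> = sqrt (3 + 24 * m) * (1 + U)"
    using \<open>U \<ge> 0\<close> by (simp add: real_sqrt_mult)
  finally show ?thesis .
qed

lemma cbar_bounds:
  fixes c :: "'a::euclidean_space \<Rightarrow> 'b::real_normed_vector \<Rightarrow> real" and Dc :: "'a \<Rightarrow> 'a"
  assumes "prob_space \<mu>" "prob_space \<nu>" and "sets \<mu> = sets borel" "sets \<nu> = sets borel"
    and "X \<in> sets borel" and "convex X" and "AE z in \<mu>. z \<in> X" and "AE z in \<nu>. z \<in> X"
    and moments: "(\<integral>\<^sup>+ z. ennreal ((norm z)\<^sup>2) \<partial>\<mu>) \<le> ennreal m"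
      "(\<integral>\<^sup>+ z. ennreal ((norm z)\<^sup>2) \<partial>\<nu>) \<le> ennreal m" and "m > 0"
    and "(norm v)\<^sup>2 \<le> U"
    and c_meas: "(\<lambda>z. c z v) \<in> borel_measurable borel"
    and c_diff: "\<And>z. z \<in> X \<Longrightarrow> ((\<lambda>w. c w v) has_derivative (\<lambda>h. Dc z \<bullet> h)) (at z within X)"
    and c_growth: "\<And>z. z \<in> X \<Longrightarrow> \<bar>c z v\<bar> \<le> Kc * (1 + (norm z)\<^sup>2 + (norm v)\<^sup>2)"
    and Dc_growth: "\<And>z. z \<in> X \<Longrightarrow> norm (Dc z) \<le> Kg * (1 + norm z + norm v)"
    and "Kc \<ge> 0" "Kg > 0"
  shows "\<bar>cbar c \<mu> v\<bar> \<le> Kc * (1 + m + U)" and "\<bar>cbar c \<nu> v\<bar> \<le> Kc * (1 + m + U)"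
    and "\<bar>cbar c \<mu> v - cbar c \<nu> v\<bar> \<le> Kg * sqrt (3 + 24 * m) * (1 + U) * W2 \<mu> \<nu>"
proof -
  have growth: "\<bar>c z v\<bar> \<le> Kc * (1 + (norm v)\<^sup>2) + Kc * (norm z)\<^sup>2" if "z \<in> X" for z
    using c_growth[OF that] by (simp add: algebra_simps)
  have "Kc * (1 + (norm v)\<^sup>2) + Kc * m \<le> Kc * (1 + m + U)"
    using \<open>Kc \<ge> 0\<close> \<open>(norm v)\<^sup>2 \<le> U\<close> by (simp add: algebra_simps mult_left_mono)
  moreover note quad_\<mu> = integrable_of_quadratic_growth[OF assms(1,3,7) moments(1) _ c_meas growth]
    and quad_\<nu> = integrable_of_quadratic_growth[OF assms(2,4,8) moments(2) _ c_meas growth]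
  ultimately show "\<bar>cbar c \<mu> v\<bar> \<le> Kc * (1 + m + U)" "\<bar>cbar c \<nu> v\<bar> \<le> Kc * (1 + m + U)"
    unfolding cbar_def using \<open>m > 0\<close> \<open>Kc \<ge> 0\<close> by force+
  have "\<bar>cbar c \<mu> v - cbar c \<nu> v\<bar> \<le> Kg * sqrt (2 * (1 + norm v)\<^sup>2 + 8 * m) * W2 \<mu> \<nu>"
    unfolding cbar_def
    using quad_\<mu>(1) quad_\<nu>(1) \<open>m > 0\<close> \<open>Kc \<ge> 0\<close> Dc_growth
    by (intro abs_integral_diff_le_W2[OF assms(1-8) c_meas _ _ c_diff _ \<open>Kg > 0\<close> _ moments \<open>m > 0\<close>])
      (auto simp: add.commute add.left_commute)
  also have "\<dots> \<le> Kg * sqrt (3 + 24 * m) * (1 + U) * W2 \<mu> \<nu>"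
    using sqrt_lipschitz_constant_le[of "norm v" U m] \<open>(norm v)\<^sup>2 \<le> U\<close> \<open>m > 0\<close> \<open>Kg > 0\<close>
    by (intro mult_right_mono) (auto simp: W2_def mult.assoc)
  finally show "\<bar>cbar c \<mu> v - cbar c \<nu> v\<bar> \<le> Kg * sqrt (3 + 24 * m) * (1 + U) * W2 \<mu> \<nu>" .
qed

section \<open>Conditional distributions and measurability\<close>

lemma cond_distr_measurable:
  assumes "cond_distr M F X B"
  shows "B \<in> M \<rightarrow>\<^sub>M prob_algebra borel"
proof (rule measurable_from_subalg)
  show "subalgebra M F" and "B \<in> F \<rightarrow>\<^sub>M prob_algebra borel"
    using assms unfolding cond_distr_def subalgebra_def by auto
qed

lemma cond_distr_prob_space:
  assumes "cond_distr M F X B" and "\<omega> \<in> space M"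
  shows "prob_space (B \<omega>)" and "sets (B \<omega>) = sets borel"
  using measurable_space[OF cond_distr_measurable[OF assms(1)] assms(2)]
  by (auto simp: space_prob_algebra)

lemma cond_distr_emeasure:
  assumes "cond_distr M F X B" and "A \<in> sets borel" and "G \<in> sets F"
  shows "emeasure M (G \<inter> X -` A) = (\<integral>\<^sup>+ \<omega>. indicator G \<omega> * emeasure (B \<omega>) A \<partial>M)"
  using assms unfolding cond_distr_def by blast

lemma AE_cond_distr_support:
  fixes X :: "'w \<Rightarrow> 'a::euclidean_space"
  assumes cd: "cond_distr M F X B" and X_in: "\<And>\<omega>. \<omega> \<in> space M \<Longrightarrow> X \<omega> \<in> S"
    and "S \<in> sets borel"
  shows "AE \<omega> in M. AE z in B \<omega>. z \<in> S"
proof -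
  have co_S: "- S \<in> sets borel"
    using \<open>S \<in> sets borel\<close> by (rule borel_comp)
  have "space F = space M"
    using cd unfolding cond_distr_def by blast
  then have "space M \<in> sets F"
    using sets.top[of F] by simp
  moreover have "space M \<inter> X -` (- S) = {}"
    using X_in by auto
  ultimately have "(\<integral>\<^sup>+ \<omega>. indicator (space M) \<omega> * emeasure (B \<omega>) (- S) \<partial>M) = 0"
    using cond_distr_emeasure[OF cd co_S] by (metis emeasure_empty)
  moreover have "(\<lambda>\<omega>. emeasure (B \<omega>) (- S)) \<in> borel_measurable M"
    using measurable_compose[OF measurable_prob_algebraD[OF cond_distr_measurable[OF cd]]
        measurable_emeasure_subprob_algebra[OF co_S]] .
  ultimately have "AE \<omega> in M. indicator (space M) \<omega> * emeasure (B \<omega>) (- S) = 0"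
    by (subst (asm) nn_integral_0_iff_AE) auto
  moreover have "AE \<omega> in M. indicator (space M) \<omega> * emeasure (B \<omega>) (- S) = 0
      \<longrightarrow> (AE z in B \<omega>. z \<in> S)"
  proof (rule AE_I2, rule impI)
    fix \<omega> assume "\<omega> \<in> space M" and "indicator (space M) \<omega> * emeasure (B \<omega>) (- S) = 0"
    then have "emeasure (B \<omega>) (- S) = 0" and "sets (B \<omega>) = sets borel"
      using cond_distr_prob_space(2)[OF cd] by auto
    with co_S show "AE z in B \<omega>. z \<in> S"
      by (intro AE_I'[of "- S"]) (auto simp: null_sets_def)
  qed
  ultimately show ?thesis
    by (rule AE_mp)
qed

lemma measurable_section_borel:
  fixes f :: "'a::euclidean_space \<Rightarrow> 'b::euclidean_space \<Rightarrow> 'c::topological_space"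
  assumes "(\<lambda>p. f (fst p) (snd p)) \<in> borel_measurable borel"
  shows "(\<lambda>z. f z v) \<in> borel_measurable borel"
proof -
  have "(\<lambda>z::'a. (z, v)) \<in> borel \<rightarrow>\<^sub>M borel \<Otimes>\<^sub>M borel"
    by measurable
  from measurable_compose[OF this[unfolded borel_prod] assms] show ?thesis
    by simp
qed

lemma integral_measurable_subprob_algebra2:
  fixes f :: "'x \<Rightarrow> 'y \<Rightarrow> real"
  assumes [measurable]: "(\<lambda>(x, y). f x y) \<in> borel_measurable (M \<Otimes>\<^sub>M N)"
    and [measurable]: "L \<in> M \<rightarrow>\<^sub>M subprob_algebra N"
  shows "(\<lambda>x. integral\<^sup>L (L x) (f x)) \<in> borel_measurable M"
proof -
  note integral_measurable_subprob_algebra[measurable] measurable_distr2[measurable]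
  have "(\<lambda>x. integral\<^sup>L (distr (L x) (M \<Otimes>\<^sub>M N) (\<lambda>y. (x, y))) (\<lambda>(x, y). f x y)) \<in> borel_measurable M"
    by measurable
  then show ?thesis
    by (rule measurable_cong[THEN iffD1, rotated]) (simp add: integral_distr)
qed

lemma measurable_cbar:
  fixes c :: "'a::euclidean_space \<Rightarrow> 'b::euclidean_space \<Rightarrow> real"
  assumes "(\<lambda>p. c (fst p) (snd p)) \<in> borel_measurable borel"
    and "B \<in> M \<rightarrow>\<^sub>M prob_algebra borel" and [measurable]: "u \<in> borel_measurable M"
  shows "(\<lambda>\<omega>. cbar c (B \<omega>) (u \<omega>)) \<in> borel_measurable M"
proof -
  have [measurable]: "(\<lambda>p. c (fst p) (snd p)) \<in> borel_measurable (borel \<Otimes>\<^sub>M borel)"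
    using assms(1) by (simp add: borel_prod)
  have "(\<lambda>q. (snd q, u (fst q))) \<in> M \<Otimes>\<^sub>M borel \<rightarrow>\<^sub>M borel \<Otimes>\<^sub>M borel"
    by measurable
  from measurable_compose[OF this, of "\<lambda>p. c (fst p) (snd p)"]
  have "(\<lambda>(\<omega>, z). c z (u \<omega>)) \<in> borel_measurable (M \<Otimes>\<^sub>M borel)"
    by (simp add: case_prod_beta)
  from integral_measurable_subprob_algebra2[OF this measurable_prob_algebraD[OF assms(2)]]
  show ?thesis
    unfolding cbar_def .
qed

section \<open>Discounted sums\<close>

lemma discounted_series_bound:
  fixes a :: "nat \<Rightarrow> real"
  assumes "\<And>t. \<bar>a t\<bar> \<le> B" and "0 \<le> g" "g < 1"
  shows "summable (\<lambda>t. g ^ t * a t)" and "\<bar>\<Sum>t. g ^ t * a t\<bar> \<le> B / (1 - g)"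
proof -
  have geom: "summable (\<lambda>t. g ^ t * B)"
    using assms by (intro summable_mult2) simp
  have le: "norm (g ^ t * a t) \<le> g ^ t * B" for t
    using assms by (simp add: abs_mult mult_left_mono)
  have norm_summable: "summable (\<lambda>t. norm (g ^ t * a t))"
    using le geom by (intro summable_norm_comparison_test) auto
  then show "summable (\<lambda>t. g ^ t * a t)"
    by (rule summable_norm_cancel)
  have "\<bar>\<Sum>t. g ^ t * a t\<bar> \<le> (\<Sum>t. norm (g ^ t * a t))"
    using summable_norm[OF norm_summable] by simp
  also have "\<dots> \<le> (\<Sum>t. g ^ t * B)"
    by (rule suminf_le[OF le norm_summable geom])
  also have "\<dots> = B / (1 - g)"
    using assms by (simp add: suminf_mult2[symmetric] suminf_geometric)
  finally show "\<bar>\<Sum>t. g ^ t * a t\<bar> \<le> B / (1 - g)" .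
qed

lemma integrable_discounted_sum:
  fixes a :: "nat \<Rightarrow> 'w \<Rightarrow> real"
  assumes "finite_measure M" and [measurable]: "\<And>t. a t \<in> borel_measurable M"
    and bound: "AE \<omega> in M. \<forall>t. \<bar>a t \<omega>\<bar> \<le> B" and "0 \<le> g" "g < 1"
  shows "integrable M (\<lambda>\<omega>. \<Sum>t. g ^ t * a t \<omega>)"
proof (rule Bochner_Integration.integrable_bound)
  show "integrable M (\<lambda>_. B / (1 - g))"
    using assms(1) by (simp add: finite_measure.integrable_const)
  show "(\<lambda>\<omega>. \<Sum>t. g ^ t * a t \<omega>) \<in> borel_measurable M"
    by measurable
  show "AE \<omega> in M. norm (\<Sum>t. g ^ t * a t \<omega>) \<le> norm (B / (1 - g))"
    using bound
  proof eventually_elim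
    case (elim \<omega>)
    then have "\<bar>\<Sum>t. g ^ t * a t \<omega>\<bar> \<le> B / (1 - g)"
      using discounted_series_bound(2)[of "\<lambda>t. a t \<omega>" B g] \<open>0 \<le> g\<close> \<open>g < 1\<close> by blast
    then show ?case
      by (metis abs_ge_self order_trans real_norm_def)
  qed
qed

lemma abs_discounted_suminf_diff_le:
  fixes a a' :: "nat \<Rightarrow> real"
  assumes "\<And>t. \<bar>a t\<bar> \<le> B" "\<And>t. \<bar>a' t\<bar> \<le> B" and "0 \<le> g" "g < 1"
  shows "ennreal \<bar>(\<Sum>t. g ^ t * a t) - (\<Sum>t. g ^ t * a' t)\<bar> \<le> (\<Sum>t. ennreal (g ^ t * \<bar>a t - a' t\<bar>))"
proof -
  have "\<bar>\<bar>a t - a' t\<bar>\<bar> \<le> 2 * B" for t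
    using assms(1,2)[of t] by linarith
  then have abs_summable: "summable (\<lambda>t. g ^ t * \<bar>a t - a' t\<bar>)"
    using discounted_series_bound(1)[of "\<lambda>t. \<bar>a t - a' t\<bar>" "2 * B" g] assms(3,4) by simp
  have "(\<Sum>t. g ^ t * a t) - (\<Sum>t. g ^ t * a' t) = (\<Sum>t. g ^ t * (a t - a' t))"
    using discounted_series_bound(1)[OF assms(1,3,4)] discounted_series_bound(1)[OF assms(2,3,4)]
    by (simp add: suminf_diff right_diff_distrib)
  also have "\<bar>\<dots>\<bar> \<le> (\<Sum>t. \<bar>g ^ t * (a t - a' t)\<bar>)"
    using abs_summable \<open>0 \<le> g\<close> by (intro summable_rabs) (simp add: abs_mult)
  also have "\<dots> = (\<Sum>t. g ^ t * \<bar>a t - a' t\<bar>)"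
    using \<open>0 \<le> g\<close> by (simp add: abs_mult)
  finally show ?thesis
    using abs_summable \<open>0 \<le> g\<close> by (simp add: ennreal_leI suminf_ennreal2)
qed

lemma nn_integral_abs_le_mult:
  fixes f W :: "'w \<Rightarrow> real"
  assumes bound: "AE \<omega> in M. \<bar>f \<omega>\<bar> \<le> L * W \<omega>" and [measurable]: "f \<in> borel_measurable M"
    and "L > 0" "c \<ge> 0"
  shows "(\<integral>\<^sup>+ \<omega>. ennreal (c * \<bar>f \<omega>\<bar>) \<partial>M) \<le> ennreal (c * L) * (\<integral>\<^sup>+ \<omega>. ennreal (W \<omega>) \<partial>M)"
proof -
  have "(\<integral>\<^sup>+ \<omega>. ennreal (c * \<bar>f \<omega>\<bar>) \<partial>M) = (\<integral>\<^sup>+ \<omega>. ennreal (c * L) * ennreal (\<bar>f \<omega>\<bar> / L) \<partial>M)"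
    using \<open>L > 0\<close> \<open>c \<ge> 0\<close> by (intro nn_integral_cong) (simp flip: ennreal_mult)
  also have "\<dots> = ennreal (c * L) * (\<integral>\<^sup>+ \<omega>. ennreal (\<bar>f \<omega>\<bar> / L) \<partial>M)"
    by (rule nn_integral_cmult) measurable
  also have "\<dots> \<le> ennreal (c * L) * (\<integral>\<^sup>+ \<omega>. ennreal (W \<omega>) \<partial>M)"
    using bound \<open>L > 0\<close>
    by (intro mult_left_mono nn_integral_mono_AE) (auto elim: AE_mp intro!: ennreal_leI simp: field_simps)
  finally show ?thesis .
qed

lemma discounted_integral_diff_le:
  fixes cb ch W :: "nat \<Rightarrow> 'w \<Rightarrow> real"
  assumes "prob_space M" and "0 \<le> g" "g < 1" and "L > 0"
    and [measurable]: "\<And>t. cb t \<in> borel_measurable M" "\<And>t. ch t \<in> borel_measurable M"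
    and bounds: "AE \<omega> in M. \<forall>t. \<bar>cb t \<omega>\<bar> \<le> B \<and> \<bar>ch t \<omega>\<bar> \<le> B \<and> \<bar>cb t \<omega> - ch t \<omega>\<bar> \<le> L * W t \<omega>"
  shows "ennreal \<bar>(\<integral>\<omega>. (\<Sum>t. g ^ t * cb t \<omega>) \<partial>M) - (\<integral>\<omega>. (\<Sum>t. g ^ t * ch t \<omega>) \<partial>M)\<bar>
    \<le> ennreal (L / (1 - g)) * (SUP t. \<integral>\<^sup>+ \<omega>. ennreal (W t \<omega>) \<partial>M)"
proof -
  interpret prob_space M by fact
  define \<epsilon> where "\<epsilon> = (SUP t. \<integral>\<^sup>+ \<omega>. ennreal (W t \<omega>) \<partial>M)"
  define d where "d t \<omega> = ennreal (g ^ t * \<bar>cb t \<omega> - ch t \<omega>\<bar>)" for t \<omega>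
  have [measurable]: "d t \<in> borel_measurable M" for t
    unfolding d_def by measurable
  have "AE \<omega> in M. \<forall>t. \<bar>cb t \<omega>\<bar> \<le> B" "AE \<omega> in M. \<forall>t. \<bar>ch t \<omega>\<bar> \<le> B"
    using bounds by (auto elim: AE_mp)
  then have int: "integrable M (\<lambda>\<omega>. \<Sum>t. g ^ t * cb t \<omega>)" "integrable M (\<lambda>\<omega>. \<Sum>t. g ^ t * ch t \<omega>)"
    using integrable_discounted_sum[where a=cb, OF finite_measure_axioms assms(5) _ \<open>0 \<le> g\<close> \<open>g < 1\<close>]
      integrable_discounted_sum[where a=ch, OF finite_measure_axioms assms(6) _ \<open>0 \<le> g\<close> \<open>g < 1\<close>]
    by blast+
  have d_int: "(\<integral>\<^sup>+ \<omega>. d t \<omega> \<partial>M) \<le> ennreal (g ^ t * L) * \<epsilon>" for t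
  proof -
    have "AE \<omega> in M. \<bar>cb t \<omega> - ch t \<omega>\<bar> \<le> L * W t \<omega>"
      using bounds by (auto elim: AE_mp)
    then have "(\<integral>\<^sup>+ \<omega>. d t \<omega> \<partial>M) \<le> ennreal (g ^ t * L) * (\<integral>\<^sup>+ \<omega>. ennreal (W t \<omega>) \<partial>M)"
      unfolding d_def
      by (rule nn_integral_abs_le_mult[OF _ _ \<open>L > 0\<close> zero_le_power[OF \<open>0 \<le> g\<close>]]) measurable
    also have "\<dots> \<le> ennreal (g ^ t * L) * \<epsilon>"
      unfolding \<epsilon>_def by (intro mult_left_mono SUP_upper) auto
    finally show ?thesis .
  qed
  have "ennreal \<bar>(\<integral>\<omega>. (\<Sum>t. g ^ t * cb t \<omega>) \<partial>M) - (\<integral>\<omega>. (\<Sum>t. g ^ t * ch t \<omega>) \<partial>M)\<bar>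
      = ennreal (norm (\<integral>\<omega>. (\<Sum>t. g ^ t * cb t \<omega>) - (\<Sum>t. g ^ t * ch t \<omega>) \<partial>M))"
    using int by simp
  also have "\<dots> \<le> (\<integral>\<^sup>+ \<omega>. ennreal (norm ((\<Sum>t. g ^ t * cb t \<omega>) - (\<Sum>t. g ^ t * ch t \<omega>))) \<partial>M)"
    using int by (intro integral_norm_bound_ennreal) simp
  also have "\<dots> \<le> (\<integral>\<^sup>+ \<omega>. (\<Sum>t. d t \<omega>) \<partial>M)"
    using bounds \<open>0 \<le> g\<close> \<open>g < 1\<close> unfolding d_def
    by (intro nn_integral_mono_AE) (auto elim: AE_mp intro!: abs_discounted_suminf_diff_le)
  also have "\<dots> = (\<Sum>t. \<integral>\<^sup>+ \<omega>. d t \<omega> \<partial>M)"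
    by (rule nn_integral_suminf) measurable
  also have "\<dots> \<le> (\<Sum>t. ennreal (g ^ t * L) * \<epsilon>)"
    by (intro suminf_le d_int summableI)
  also have "\<dots> = ennreal (L / (1 - g)) * \<epsilon>"
  proof -
    have "(\<Sum>t. ennreal (g ^ t * L)) = ennreal (\<Sum>t. g ^ t * L)"
      using \<open>0 \<le> g\<close> \<open>g < 1\<close> \<open>L > 0\<close> by (intro suminf_ennreal2) (auto intro: summable_mult2)
    also have "(\<Sum>t. g ^ t * L) = L / (1 - g)"
      using \<open>0 \<le> g\<close> \<open>g < 1\<close> by (simp add: suminf_mult2[symmetric] suminf_geometric)
    finally show ?thesis
      by (simp add: ennreal_suminf_multc)
  qed
  finally show ?thesis
    unfolding \<epsilon>_def .
qed

theorem lemma5: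
  fixes M :: "'w measure"
    and X :: "'a::euclidean_space set" and U :: "'b::euclidean_space set"
    and Y :: "'c::euclidean_space set"
    and P :: "'a \<Rightarrow> 'b \<Rightarrow> 'a measure" and Obs :: "'a \<Rightarrow> 'c measure"
    and c :: "'a \<Rightarrow> 'b \<Rightarrow> real" and Dc :: "'a \<Rightarrow> 'b \<Rightarrow> 'a"
    and g :: real and H :: nat
    and \<pi> :: "'a measure \<Rightarrow> 'b"
    and x :: "nat \<Rightarrow> 'w \<Rightarrow> 'a" and y :: "nat \<Rightarrow> 'w \<Rightarrow> 'c" and u :: "nat \<Rightarrow> 'w \<Rightarrow> 'b"
    and b :: "nat \<Rightarrow> 'w \<Rightarrow> 'a measure" and bh :: "nat \<Rightarrow> 'w \<Rightarrow> 'a measure"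
    and Kc Kg M\<^sub>\<pi> U\<^sub>\<pi> :: real
  assumes prob: "prob_space M"
    and X_borel: "X \<in> sets borel" and U_borel: "U \<in> sets borel" and Y_borel: "Y \<in> sets borel"
    and g: "0 < g" "g < 1"
    (* closed-loop processes *)
    and x_meas: "\<And>t. x t \<in> borel_measurable M"
    and y_meas: "\<And>t. y t \<in> borel_measurable M"
    and u_meas: "\<And>t. u t \<in> borel_measurable M"
    and x_in: "\<And>t \<omega>. \<omega> \<in> space M \<Longrightarrow> x t \<omega> \<in> X"
    and y_in: "\<And>t \<omega>. \<omega> \<in> space M \<Longrightarrow> y t \<omega> \<in> Y"
    and u_in: "\<And>t \<omega>. \<omega> \<in> space M \<Longrightarrow> u t \<omega> \<in> U"
    (* x_{t+1} ~ P(. | x_t, u_t) given the full past *)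
    and trans: "\<And>t. cond_distr M
        (sigma (space M) (\<Union>k\<in>{..t}. pre_sets M (x k) \<union> pre_sets M (y k) \<union> pre_sets M (u k)))
        (x (Suc t)) (\<lambda>\<omega>. P (x t \<omega>) (u t \<omega>))"
    (* y_t ~ O(. | x_t) given the past *)
    and obs: "\<And>t. cond_distr M
        (sigma (space M) ((\<Union>k\<in>{..t}. pre_sets M (x k)) \<union>
                          (\<Union>k\<in>{..<t}. pre_sets M (y k) \<union> pre_sets M (u k))))
        (y t) (\<lambda>\<omega>. Obs (x t \<omega>))"
    (* beliefs and finite memory belief approximations *)
    and belief: "\<And>t. cond_distr M (hist_alg M y u 0 t) (x t) (b t)"
    and fm_belief: "\<And>t. cond_distr M (hist_alg M y u (t - H) t) (x t) (bh t)"
    (* belief-based policy *)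
    and policy: "\<And>t \<omega>. \<omega> \<in> space M \<Longrightarrow> u t \<omega> = \<pi> (b t \<omega>)"
    (* regularity of the stage cost *)
    and X_convex: "convex X"
    and c_meas: "(\<lambda>p. c (fst p) (snd p)) \<in> borel_measurable borel"
    and c_diff: "\<And>z v. z \<in> X \<Longrightarrow> v \<in> U \<Longrightarrow>
        ((\<lambda>w. c w v) has_derivative (\<lambda>h. Dc z v \<bullet> h)) (at z within X)"
    and Dc_cont: "\<And>v. v \<in> U \<Longrightarrow> continuous_on X (\<lambda>w. Dc w v)"
    and Kc: "0 < Kc" and Kg: "0 < Kg"
    and c_growth: "\<And>z v. z \<in> X \<Longrightarrow> v \<in> U \<Longrightarrow>
        \<bar>c z v\<bar> \<le> Kc * (1 + (norm z)\<^sup>2 + (norm v)\<^sup>2)"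
    and Dc_growth: "\<And>z v. z \<in> X \<Longrightarrow> v \<in> U \<Longrightarrow>
        norm (Dc z v) \<le> Kg * (1 + norm z + norm v)"
    (* moment bounds *)
    and M_pos: "0 < M\<^sub>\<pi>"
    and moments: "AE \<omega> in M. \<forall>t.
        (\<integral>\<^sup>+ z. ennreal ((norm z)\<^sup>2) \<partial>(b t \<omega>)) \<le> ennreal M\<^sub>\<pi> \<and>
        (\<integral>\<^sup>+ z. ennreal ((norm z)\<^sup>2) \<partial>(bh t \<omega>)) \<le> ennreal M\<^sub>\<pi>"
    and U_pos: "0 < U\<^sub>\<pi>"
    and input_bound: "AE \<omega> in M. \<forall>t. (norm (u t \<omega>))\<^sup>2 \<le> U\<^sub>\<pi>"
  shows "ennreal \<bar>disc_cost M g c b u - disc_cost M g c bh u\<bar>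
     \<le> ennreal ((Kg * sqrt (3 + 24 * M\<^sub>\<pi>) * (1 + U\<^sub>\<pi>)) / (1 - g)) * belief_mismatch M b bh"
proof -
  (* The bound holds pathwise for whatever inputs are applied. *)
  interpret prob_space M
    by (rule prob)
  define cb where "cb t \<omega> = cbar c (b t \<omega>) (u t \<omega>)" for t \<omega>
  define ch where "ch t \<omega> = cbar c (bh t \<omega>) (u t \<omega>)" for t \<omega>
  have cb_meas: "cb t \<in> borel_measurable M" and ch_meas: "ch t \<in> borel_measurable M" for t
    unfolding cb_def ch_def
    using measurable_cbar[OF c_meas cond_distr_measurable[OF belief] u_meas]
      measurable_cbar[OF c_meas cond_distr_measurable[OF fm_belief] u_meas] by auto
  have support: "AE \<omega> in M. \<forall>t. (AE z in b t \<omega>. z \<in> X) \<and> (AE z in bh t \<omega>. z \<in> X)"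
    unfolding AE_all_countable AE_conj_iff
    using AE_cond_distr_support[OF belief x_in X_borel] AE_cond_distr_support[OF fm_belief x_in X_borel]
    by blast
  have bounds: "AE \<omega> in M. \<forall>t. \<bar>cb t \<omega>\<bar> \<le> Kc * (1 + M\<^sub>\<pi> + U\<^sub>\<pi>) \<and> \<bar>ch t \<omega>\<bar> \<le> Kc * (1 + M\<^sub>\<pi> + U\<^sub>\<pi>) \<and>
      \<bar>cb t \<omega> - ch t \<omega>\<bar> \<le> Kg * sqrt (3 + 24 * M\<^sub>\<pi>) * (1 + U\<^sub>\<pi>) * W2 (b t \<omega>) (bh t \<omega>)"
    using support moments input_bound AE_space
  proof eventually_elim
    case (elim \<omega>)
    show ?case
    proof
      fix t
      note b = cond_distr_prob_space[OF belief[of t] \<open>\<omega> \<in> space M\<close>]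
        and bh = cond_distr_prob_space[OF fm_belief[of t] \<open>\<omega> \<in> space M\<close>]
      note v = u_in[OF \<open>\<omega> \<in> space M\<close>, of t]
      have "AE z in b t \<omega>. z \<in> X" "AE z in bh t \<omega>. z \<in> X"
        "(\<integral>\<^sup>+ z. ennreal ((norm z)\<^sup>2) \<partial>(b t \<omega>)) \<le> ennreal M\<^sub>\<pi>"
        "(\<integral>\<^sup>+ z. ennreal ((norm z)\<^sup>2) \<partial>(bh t \<omega>)) \<le> ennreal M\<^sub>\<pi>"
        "(norm (u t \<omega>))\<^sup>2 \<le> U\<^sub>\<pi>"
        using elim by auto
      from cbar_bounds[where c=c and v="u t \<omega>" and Dc="\<lambda>z. Dc z (u t \<omega>)",
          OF b(1) bh(1) b(2) bh(2) X_borel X_convex this(1-4) M_pos this(5)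
          measurable_section_borel[OF c_meas] c_diff[OF _ v] c_growth[OF _ v] Dc_growth[OF _ v]] Kc Kg
      show "\<bar>cb t \<omega>\<bar> \<le> Kc * (1 + M\<^sub>\<pi> + U\<^sub>\<pi>) \<and> \<bar>ch t \<omega>\<bar> \<le> Kc * (1 + M\<^sub>\<pi> + U\<^sub>\<pi>) \<and>
          \<bar>cb t \<omega> - ch t \<omega>\<bar> \<le> Kg * sqrt (3 + 24 * M\<^sub>\<pi>) * (1 + U\<^sub>\<pi>) * W2 (b t \<omega>) (bh t \<omega>)"
        unfolding cb_def ch_def by auto
    qed
  qed
  have "0 < Kg * sqrt (3 + 24 * M\<^sub>\<pi>) * (1 + U\<^sub>\<pi>)"
    using Kg M_pos U_pos by simp
  from discounted_integral_diff_le[OF prob less_imp_le[OF g(1)] g(2) this cb_meas ch_meas bounds]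
  show ?thesis
    unfolding disc_cost_def belief_mismatch_def cb_def ch_def .
qed

end
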